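(* Let $N\ge 1$, $c\in\mathbb{R}$, and consider the manifold of Jacobi parameters $a_1,\dots,a_{N-1}>0$, $b_1,\dots,b_N\in\mathbb{R}$ with $\sum_{j=1}^N b_j=c$, with the Poisson bracket described in the context. Let $P_n$ be the monic orthogonal polynomials defined in the context. Then for every $n=1,2,\dots,N$ and all $x,y$, \[ \{P_n(x),P_n(y)\}=\{P_{n-1}(x),P_{n-1}(y)\}=0, \] \[ 2\{P_n(x),P_{n-1}(y)\} = \frac{P_n(x)P_{n-1}(y)-P_n(y)P_{n-1}(x)}{x-y} - P_{n-1}(x)P_{n-1}(y). \]
   Context: The Poisson bracket on functions of $(a_1,\dots,a_{N-1},b_1,\dots,b_N)$ is the bilinear antisymmetric bracket satisfying the Leibniz rule whose only nonzero brackets among the coordinates are $\{b_k,a_k\}=-\tfrac14 a_k$ for $k=1,\dots,N-1$ and $\{b_k,a_{k-1}\}=\tfrac14 a_{k-1}$ for $k=2,\dots,N$. Brackets of functions depending on auxiliary variables $x,y$ are computed with $x,y$ held fixed; the identity with the difference quotient is understood as an identity of polynomials in $x,y$. The monic polynomials are defined by $P_{-1}=0$, $P_0=1$, $P_{j+1}(x)=(x-b_{j+1})P_j(x)-a_j^2P_{j-1}(x)$; equivalently $P_n(x)=\det(x-J_n)$ where $J_n$ is the $n\times n$ tridiagonal matrix with diagonal $b_1,\dots,b_n$ and off-diagonal entries $a_1,\dots,a_{n-1}$. *)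

theory Defs
  imports "HOL-Analysis.Analysis"
begin

text \<open>Jacobi parameters are represented by functions a b :: nat => real, of which only
 a 1 .. a (N-1) and b 1 .. b N are used.\<close>

definition dA :: "((nat \<Rightarrow> real) \<Rightarrow> (nat \<Rightarrow> real) \<Rightarrow> real) \<Rightarrow> nat \<Rightarrow> (nat \<Rightarrow> real) \<Rightarrow> (nat \<Rightarrow> real) \<Rightarrow> real"
  where "dA F k a b = deriv (\<lambda>t. F (a(k := t)) b) (a k)"

definition dB :: "((nat \<Rightarrow> real) \<Rightarrow> (nat \<Rightarrow> real) \<Rightarrow> real) \<Rightarrow> nat \<Rightarrow> (nat \<Rightarrow> real) \<Rightarrow> (nat \<Rightarrow> real) \<Rightarrow> real"
  where "dB F k a b = deriv (\<lambda>t. F a (b(k := t))) (b k)"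

text \<open>The Poisson bracket {F,G} = sum_{i,j} {z_i,z_j} dF/dz_i dG/dz_j with structure
 {b_k,a_k} = -a_k/4 (k=1..N-1), {b_k,a_(k-1)} = a_(k-1)/4 (k=2..N), all other
 brackets of coordinates zero.\<close>
definition pb :: "nat \<Rightarrow> ((nat \<Rightarrow> real) \<Rightarrow> (nat \<Rightarrow> real) \<Rightarrow> real)
    \<Rightarrow> ((nat \<Rightarrow> real) \<Rightarrow> (nat \<Rightarrow> real) \<Rightarrow> real) \<Rightarrow> (nat \<Rightarrow> real) \<Rightarrow> (nat \<Rightarrow> real) \<Rightarrow> real"
  where "pb N F G a b =
    (\<Sum>k=1..N-1. (- a k / 4) * (dB F k a b * dA G k a b - dA F k a b * dB G k a b))
  + (\<Sum>k=2..N. (a (k-1) / 4) * (dB F k a b * dA G (k-1) a b - dA F (k-1) a b * dB G k a b))"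

fun P :: "(nat \<Rightarrow> real) \<Rightarrow> (nat \<Rightarrow> real) \<Rightarrow> nat \<Rightarrow> real \<Rightarrow> real" where
  "P a b 0 x = 1"
| "P a b (Suc 0) x = x - b 1"
| "P a b (Suc (Suc j)) x = (x - b (j + 2)) * P a b (Suc j) x - (a (j + 1))^2 * P a b j x"

end

theory Submission
  imports Defs
begin

(* Since P_n depends only on a_1..a_(n-1) and b_1..b_n, the Leibniz rule expresses every
   bracket at level n+1 through the brackets at level n and the few nonvanishing brackets of
   b_(n+1) and a_n with P_(n-1), P_n, P_(n+1).  Written without division, the cross relation
   at level n reads 2 (x - y) {P_n(x), P_(n-1)(y)} = W_n(x,y) - (x - y) P_(n-1)(x) P_(n-1)(y),
   where W_n = christoffel_darboux_numerator a b (n - 1) is the Christoffel-Darboux numerator.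
   Since W_n is antisymmetric, this forces {P_n(x), P_(n-1)(y)} to be symmetric in x and y,
   which is exactly what makes {P_(n+1)(x), P_(n+1)(y)} vanish.  The recursion
   W_(n+1) = (x - y) P_n(x) P_n(y) + a_n^2 W_n then carries the cross relation to level n+1. *)

(* dA and dB are defined through deriv, which is junk where the partial derivative does not
   exist; the Leibniz rule for pb needs differentiability in each coordinate separately. *)
definition separately_differentiable :: "((nat \<Rightarrow> real) \<Rightarrow> (nat \<Rightarrow> real) \<Rightarrow> real) \<Rightarrow> bool" where
  "separately_differentiable F \<longleftrightarrow>
     (\<forall>k a b t. (\<lambda>s. F (a(k := s)) b) field_differentiable at t) \<and>
     (\<forall>k a b t. (\<lambda>s. F a (b(k := s))) field_differentiable at t)"

lemma separately_differentiable_const [simp]: "separately_differentiable (\<lambda>p q. c)"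
  by (simp add: separately_differentiable_def)

lemma separately_differentiable_mult [simp]:
  "separately_differentiable F \<Longrightarrow> separately_differentiable G \<Longrightarrow>
   separately_differentiable (\<lambda>p q. F p q * G p q)"
  by (simp add: separately_differentiable_def field_differentiable_mult)

lemma separately_differentiable_diff [simp]:
  "separately_differentiable F \<Longrightarrow> separately_differentiable G \<Longrightarrow>
   separately_differentiable (\<lambda>p q. F p q - G p q)"
  by (simp add: separately_differentiable_def field_differentiable_diff)

lemma separately_differentiable_power [simp]:
  "separately_differentiable F \<Longrightarrow> separately_differentiable (\<lambda>p q. F p q ^ n)"
  by (simp add: separately_differentiable_def field_differentiable_power)

lemma field_differentiable_if_ident: "(\<lambda>s. if cond then s else c) field_differentiable at t"
  by (cases cond) simp_all

lemma separately_differentiable_coord_a [simp]: "separately_differentiable (\<lambda>p q. p j)"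
  by (simp add: separately_differentiable_def fun_upd_apply field_differentiable_if_ident)

lemma separately_differentiable_coord_b [simp]: "separately_differentiable (\<lambda>p q. q j)"
  by (simp add: separately_differentiable_def fun_upd_apply field_differentiable_if_ident)

lemma dA_mult:
  "separately_differentiable F \<Longrightarrow> separately_differentiable G \<Longrightarrow>
   dA (\<lambda>p q. F p q * G p q) k a b = F a b * dA G k a b + dA F k a b * G a b"
  by (simp add: dA_def separately_differentiable_def)

lemma dB_mult:
  "separately_differentiable F \<Longrightarrow> separately_differentiable G \<Longrightarrow>
   dB (\<lambda>p q. F p q * G p q) k a b = F a b * dB G k a b + dB F k a b * G a b"
  by (simp add: dB_def separately_differentiable_def)

lemma dA_diff:
  "separately_differentiable F \<Longrightarrow> separately_differentiable G \<Longrightarrow>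
   dA (\<lambda>p q. F p q - G p q) k a b = dA F k a b - dA G k a b"
  by (simp add: dA_def separately_differentiable_def)

lemma dB_diff:
  "separately_differentiable F \<Longrightarrow> separately_differentiable G \<Longrightarrow>
   dB (\<lambda>p q. F p q - G p q) k a b = dB F k a b - dB G k a b"
  by (simp add: dB_def separately_differentiable_def)

lemma dA_const [simp]: "dA (\<lambda>p q. c) k a b = 0"
  by (simp add: dA_def)

lemma dB_const [simp]: "dB (\<lambda>p q. c) k a b = 0"
  by (simp add: dB_def)

lemma dA_coord_a [simp]: "dA (\<lambda>p q. p j) k a b = (if k = j then 1 else 0)"
  by (simp add: dA_def fun_upd_apply)

lemma dB_coord_a [simp]: "dB (\<lambda>p q. p j) k a b = 0"
  by (simp add: dB_def)

lemma dA_coord_b [simp]: "dA (\<lambda>p q. q j) k a b = 0"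
  by (simp add: dA_def)

lemma dB_coord_b [simp]: "dB (\<lambda>p q. q j) k a b = (if k = j then 1 else 0)"
  by (simp add: dB_def fun_upd_apply)

lemma pb_antisym: "pb N F G a b = - pb N G F a b"
  unfolding pb_def by (simp add: algebra_simps sum_negf[symmetric])

lemma pb_self [simp]: "pb N F F a b = 0"
  using pb_antisym[of N F F a b] by simp

lemma pb_const_left [simp]: "pb N (\<lambda>p q. c) G a b = 0"
  by (simp add: pb_def)

lemma pb_const_right [simp]: "pb N F (\<lambda>p q. c) a b = 0"
  by (simp add: pb_def)

lemma pb_mult_left:
  assumes "separately_differentiable F" "separately_differentiable G"
  shows "pb N (\<lambda>p q. F p q * G p q) H a b = F a b * pb N G H a b + G a b * pb N F H a b"
  unfolding pb_def dA_mult[OF assms] dB_mult[OF assms]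
  by (simp add: sum_distrib_left sum.distrib[symmetric] algebra_simps)

lemma pb_diff_left:
  assumes "separately_differentiable F" "separately_differentiable G"
  shows "pb N (\<lambda>p q. F p q - G p q) H a b = pb N F H a b - pb N G H a b"
proof -
  have "c * ((u - v) * w - (x - y) * z) = c * (u * w - x * z) - c * (v * w - y * z)"
    for c u v w x y z :: real
    by algebra
  then show ?thesis
    by (simp add: pb_def dA_diff[OF assms] dB_diff[OF assms] sum_subtractf sum_negf)
qed

lemma pb_coord_b_left:
  "pb N (\<lambda>p q. q j) G a b =
     (if 1 \<le> j \<and> j < N then - a j / 4 * dA G j a b else 0)
   + (if 2 \<le> j \<and> j \<le> N then a (j - 1) / 4 * dA G (j - 1) a b else 0)"
proof -
  have "(\<Sum>k=1..N-1. - a k / 4 * (dB (\<lambda>p q. q j) k a b * dA G k a b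
                                    - dA (\<lambda>p q. q j) k a b * dB G k a b))
      = (\<Sum>k=1..N-1. if k = j then - a j / 4 * dA G j a b else 0)"
    by (rule sum.cong) auto
  moreover have "(\<Sum>k=2..N. a (k - 1) / 4 * (dB (\<lambda>p q. q j) k a b * dA G (k - 1) a b
                                           - dA (\<lambda>p q. q j) (k - 1) a b * dB G k a b))
      = (\<Sum>k=2..N. if k = j then a (j - 1) / 4 * dA G (j - 1) a b else 0)"
    by (rule sum.cong) auto
  ultimately show ?thesis
    unfolding pb_def by (simp add: sum.delta) arith
qed

lemma pb_coord_a_left:
  "pb N (\<lambda>p q. p j) G a b =
     (if 1 \<le> j \<and> j < N then a j / 4 * (dB G j a b - dB G (j + 1) a b) else 0)"
proof -
  have "(\<Sum>k=1..N-1. - a k / 4 * (dB (\<lambda>p q. p j) k a b * dA G k a b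
                                    - dA (\<lambda>p q. p j) k a b * dB G k a b))
      = (\<Sum>k=1..N-1. if k = j then a j / 4 * dB G j a b else 0)"
    by (rule sum.cong) auto
  moreover have "(\<Sum>k=2..N. a (k - 1) / 4 * (dB (\<lambda>p q. p j) k a b * dA G (k - 1) a b
                                           - dA (\<lambda>p q. p j) (k - 1) a b * dB G k a b))
      = (\<Sum>k=2..N. if k = j + 1 then - a j / 4 * dB G (j + 1) a b else 0)"
    by (rule sum.cong) auto
  ultimately show ?thesis
    unfolding pb_def by (simp add: sum.delta right_diff_distrib) arith
qed

lemma pb_power2_left:
  "separately_differentiable F \<Longrightarrow> pb N (\<lambda>p q. (F p q)\<^sup>2) H a b = 2 * F a b * pb N F H a b"
  using pb_mult_left[of F F N H a b] by (simp add: power2_eq_square)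

lemma pb_recurrence_left:
  assumes "separately_differentiable F" "separately_differentiable G"
  shows "pb N (\<lambda>p q. (x - q j) * F p q - (p i)\<^sup>2 * G p q) H a b
       = (x - b j) * pb N F H a b - F a b * pb N (\<lambda>p q. q j) H a b
         - (a i)\<^sup>2 * pb N G H a b - 2 * a i * G a b * pb N (\<lambda>p q. p i) H a b"
  using assms by (simp add: pb_diff_left pb_mult_left pb_power2_left)

lemma pb_recurrence_right:
  assumes "separately_differentiable F" "separately_differentiable G"
  shows "pb N H (\<lambda>p q. (x - q j) * F p q - (p i)\<^sup>2 * G p q) a b
       = (x - b j) * pb N H F a b - F a b * pb N H (\<lambda>p q. q j) a b
         - (a i)\<^sup>2 * pb N H G a b - 2 * a i * G a b * pb N H (\<lambda>p q. p i) a b"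
  using pb_recurrence_left[OF assms, of N x j i H a b] pb_antisym[of N H] by simp

abbreviation (input) Pfun :: "nat \<Rightarrow> real \<Rightarrow> (nat \<Rightarrow> real) \<Rightarrow> (nat \<Rightarrow> real) \<Rightarrow> real" where
  "Pfun n x \<equiv> \<lambda>p q. P p q n x"

lemma separately_differentiable_P [simp]: "separately_differentiable (Pfun n x)"
  by (induction n rule: induct_nat_012) (simp_all add: numeral_2_eq_2)

lemma Pfun_Suc_Suc:
  "Pfun (Suc (Suc m)) x
     = (\<lambda>p q. (x - q (Suc (Suc m))) * P p q (Suc m) x - (p (Suc m))\<^sup>2 * P p q m x)"
  by (simp add: fun_eq_iff)

lemma P_fun_upd_a: "m \<le> k \<Longrightarrow> P (a(k := t)) b m x = P a b m x"
  by (induction a b m x rule: P.induct) auto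

lemma P_fun_upd_b: "m < k \<Longrightarrow> P a (b(k := t)) m x = P a b m x"
  by (induction a b m x rule: P.induct) auto

lemma P_fun_upd_b_top:
  "P a (b(Suc m := t)) (Suc m) x = P a b (Suc m) x - (t - b (Suc m)) * P a b m x"
  by (cases m) (simp_all add: P_fun_upd_b algebra_simps)

lemma dA_P_eq_0: "m \<le> k \<Longrightarrow> dA (Pfun m x) k a b = 0"
  by (simp add: dA_def P_fun_upd_a)

lemma dB_P_eq_0: "m < k \<Longrightarrow> dB (Pfun m x) k a b = 0"
  by (simp add: dB_def P_fun_upd_b)

lemma dB_P_top: "dB (Pfun (Suc m) x) (Suc m) a b = - P a b m x"
proof -
  have "((\<lambda>t. P a b (Suc m) x - (t - b (Suc m)) * P a b m x) has_real_derivative - P a b m x)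
          (at (b (Suc m)))"
    by (auto intro!: derivative_eq_intros)
  then show ?thesis
    by (simp add: dB_def P_fun_upd_b_top DERIV_imp_deriv)
qed

lemma pb_coord_b_P: "k < j \<Longrightarrow> pb N (\<lambda>p q. q j) (Pfun k z) a b = 0"
  by (simp add: pb_coord_b_left dA_P_eq_0)

lemma pb_coord_a_P: "m < k \<Longrightarrow> pb N (\<lambda>p q. p k) (Pfun m z) a b = 0"
  by (simp add: pb_coord_a_left dB_P_eq_0)

lemma pb_coord_a_P_top:
  "Suc m < N \<Longrightarrow>
   pb N (\<lambda>p q. p (Suc m)) (Pfun (Suc m) z) a b = - a (Suc m) / 4 * P a b m z"
  by (simp add: pb_coord_a_left dB_P_top dB_P_eq_0)

lemma pb_coord_b_coord_a:
  "1 \<le> k \<Longrightarrow> k < N \<Longrightarrow> pb N (\<lambda>p q. q (Suc k)) (\<lambda>p q. p k) a b = a k / 4"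
  by (simp add: pb_coord_b_left)

definition christoffel_darboux_numerator ::
    "(nat \<Rightarrow> real) \<Rightarrow> (nat \<Rightarrow> real) \<Rightarrow> nat \<Rightarrow> real \<Rightarrow> real \<Rightarrow> real"
  where "christoffel_darboux_numerator a b n x y
           = P a b (Suc n) x * P a b n y - P a b (Suc n) y * P a b n x"

lemma christoffel_darboux_numerator_swap:
  "christoffel_darboux_numerator a b n y x = - christoffel_darboux_numerator a b n x y"
  by (simp add: christoffel_darboux_numerator_def)

lemma christoffel_darboux_numerator_Suc:
  "christoffel_darboux_numerator a b (Suc n) x y
     = (x - y) * P a b (Suc n) x * P a b (Suc n) y
       + (a (Suc n))\<^sup>2 * christoffel_darboux_numerator a b n x y"
  by (simp add: christoffel_darboux_numerator_def algebra_simps)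

lemma pb_P_coord_b: "k < j \<Longrightarrow> pb N (Pfun k z) (\<lambda>p q. q j) a b = 0"
  using pb_antisym[of N "Pfun k z"] by (simp add: pb_coord_b_P)

lemma pb_P_coord_a: "m < k \<Longrightarrow> pb N (Pfun m z) (\<lambda>p q. p k) a b = 0"
  using pb_antisym[of N "Pfun m z"] by (simp add: pb_coord_a_P)

lemma pb_coord_a_coord_b:
  "1 \<le> k \<Longrightarrow> k < N \<Longrightarrow> pb N (\<lambda>p q. p k) (\<lambda>p q. q (Suc k)) a b = - a k / 4"
  by (simp add: pb_coord_a_left)

context
  fixes N m :: nat and a b :: "nat \<Rightarrow> real"
  assumes le_N: "Suc (Suc m) \<le> N"
begin

lemma pb_P_Suc_Suc_P_Suc:
  assumes "pb N (Pfun (Suc m) x) (Pfun (Suc m) y) a b = 0"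
  shows "pb N (Pfun (Suc (Suc m)) x) (Pfun (Suc m) y) a b
       = (a (Suc m))\<^sup>2 * pb N (Pfun (Suc m) y) (Pfun m x) a b
         + (a (Suc m))\<^sup>2 / 2 * P a b m x * P a b m y"
  unfolding Pfun_Suc_Suc
    pb_recurrence_left[OF separately_differentiable_P separately_differentiable_P]
  using assms le_N pb_antisym[of N "Pfun m x" "Pfun (Suc m) y"]
  by (simp add: pb_coord_b_P pb_coord_a_P_top power2_eq_square)

lemma pb_coord_b_P_Suc_Suc:
  "pb N (\<lambda>p q. q (Suc (Suc m))) (Pfun (Suc (Suc m)) x) a b
     = - (a (Suc m))\<^sup>2 / 2 * P a b m x"
  unfolding Pfun_Suc_Suc
    pb_recurrence_right[OF separately_differentiable_P separately_differentiable_P]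
  using le_N by (simp add: pb_coord_b_P pb_coord_b_coord_a power2_eq_square)

lemma pb_coord_a_P_Suc_Suc:
  "pb N (\<lambda>p q. p (Suc m)) (Pfun (Suc (Suc m)) x) a b
     = a (Suc m) / 4 * (P a b (Suc m) x - (x - b (Suc (Suc m))) * P a b m x)"
  unfolding Pfun_Suc_Suc
    pb_recurrence_right[OF separately_differentiable_P separately_differentiable_P]
  using le_N by (simp add: pb_coord_a_P pb_coord_a_P_top pb_coord_a_coord_b field_simps)

lemma pb_P_P_Suc_Suc:
  assumes "pb N (Pfun m x) (Pfun m y) a b = 0"
  shows "pb N (Pfun m x) (Pfun (Suc (Suc m)) y) a b
       = - (y - b (Suc (Suc m))) * pb N (Pfun (Suc m) y) (Pfun m x) a b"
  unfolding Pfun_Suc_Suc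
    pb_recurrence_right[OF separately_differentiable_P separately_differentiable_P]
  using assms pb_antisym[of N "Pfun m x" "Pfun (Suc m) y"]
  by (simp add: pb_P_coord_b pb_P_coord_a algebra_simps)

lemma pb_P_Suc_Suc_self:
  assumes "pb N (Pfun m x) (Pfun m y) a b = 0"
    and "pb N (Pfun (Suc m) y) (Pfun (Suc m) x) a b = 0"
  shows "2 * pb N (Pfun (Suc (Suc m)) x) (Pfun (Suc (Suc m)) y) a b
       = (a (Suc m))\<^sup>2 *
           (2 * (y - b (Suc (Suc m))) * pb N (Pfun (Suc m) y) (Pfun m x) a b
            - 2 * (x - b (Suc (Suc m))) * pb N (Pfun (Suc m) x) (Pfun m y) a b
            + (y - x) * P a b m x * P a b m y + christoffel_darboux_numerator a b m x y)"
proof -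
  have P_Suc_P_Suc_Suc: "pb N (Pfun (Suc m) x) (Pfun (Suc (Suc m)) y) a b
      = - ((a (Suc m))\<^sup>2 * pb N (Pfun (Suc m) x) (Pfun m y) a b
           + (a (Suc m))\<^sup>2 / 2 * P a b m y * P a b m x)"
    using pb_P_Suc_Suc_P_Suc[OF assms(2)] pb_antisym[of N "Pfun (Suc m) x"] by simp
  show ?thesis
    unfolding Pfun_Suc_Suc[of m x]
      pb_recurrence_left[OF separately_differentiable_P separately_differentiable_P]
      P_Suc_P_Suc_Suc pb_coord_b_P_Suc_Suc pb_coord_a_P_Suc_Suc pb_P_P_Suc_Suc[OF assms(1)]
    by (simp add: christoffel_darboux_numerator_def field_simps power2_eq_square)
qed

lemma pb_P_step:
  assumes commute_m: "\<And>x y. pb N (Pfun m x) (Pfun m y) a b = 0"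
    and commute_Suc_m: "\<And>x y. pb N (Pfun (Suc m) x) (Pfun (Suc m) y) a b = 0"
    and cross_m: "\<And>x y. 2 * (x - y) * pb N (Pfun (Suc m) x) (Pfun m y) a b
                   = christoffel_darboux_numerator a b m x y - (x - y) * P a b m x * P a b m y"
  shows "pb N (Pfun (Suc (Suc m)) x) (Pfun (Suc (Suc m)) y) a b = 0"
    and "2 * (x - y) * pb N (Pfun (Suc (Suc m)) x) (Pfun (Suc m) y) a b
         = christoffel_darboux_numerator a b (Suc m) x y
           - (x - y) * P a b (Suc m) x * P a b (Suc m) y"
proof -
  have cross_swap: "2 * (x - y) * pb N (Pfun (Suc m) y) (Pfun m x) a b
      = christoffel_darboux_numerator a b m x y - (x - y) * P a b m x * P a b m y"
  proof -
    have "2 * (x - y) * pb N (Pfun (Suc m) y) (Pfun m x) a b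
        = - (2 * (y - x) * pb N (Pfun (Suc m) y) (Pfun m x) a b)"
      by (simp add: algebra_simps)
    also have "\<dots>
        = - (christoffel_darboux_numerator a b m y x - (y - x) * P a b m y * P a b m x)"
      by (simp only: cross_m)
    finally show ?thesis
      by (simp add: christoffel_darboux_numerator_swap[of a b m x y] algebra_simps)
  qed
  show "pb N (Pfun (Suc (Suc m)) x) (Pfun (Suc (Suc m)) y) a b = 0"
  proof (cases "x = y")
    case False
    have "2 * (x - y) * pb N (Pfun (Suc m) x) (Pfun m y) a b
        = 2 * (x - y) * pb N (Pfun (Suc m) y) (Pfun m x) a b"
      by (simp only: cross_m cross_swap)
    then have cross_sym:
        "pb N (Pfun (Suc m) x) (Pfun m y) a b = pb N (Pfun (Suc m) y) (Pfun m x) a b"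
      using False by simp
    have "2 * pb N (Pfun (Suc (Suc m)) x) (Pfun (Suc (Suc m)) y) a b
        = (a (Suc m))\<^sup>2 * (christoffel_darboux_numerator a b m x y
            - 2 * (x - y) * pb N (Pfun (Suc m) y) (Pfun m x) a b - (x - y) * P a b m x * P a b m y)"
      unfolding pb_P_Suc_Suc_self[OF commute_m commute_Suc_m] cross_sym
      by (simp add: algebra_simps)
    then show ?thesis
      unfolding cross_swap by simp
  qed simp
  show "2 * (x - y) * pb N (Pfun (Suc (Suc m)) x) (Pfun (Suc m) y) a b
      = christoffel_darboux_numerator a b (Suc m) x y
        - (x - y) * P a b (Suc m) x * P a b (Suc m) y"
  proof -
    have "2 * (x - y) * pb N (Pfun (Suc (Suc m)) x) (Pfun (Suc m) y) a b
        = (a (Suc m))\<^sup>2 * (2 * (x - y) * pb N (Pfun (Suc m) y) (Pfun m x) a b)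
          + (a (Suc m))\<^sup>2 * (x - y) * P a b m x * P a b m y"
      unfolding pb_P_Suc_Suc_P_Suc[OF commute_Suc_m] by (simp add: field_simps)
    also have "\<dots> = (a (Suc m))\<^sup>2 * christoffel_darboux_numerator a b m x y"
      unfolding cross_swap by (simp add: algebra_simps)
    finally show ?thesis
      by (simp add: christoffel_darboux_numerator_Suc)
  qed
qed

end

lemma pb_P_brackets:
  "Suc m \<le> N \<Longrightarrow>
     (\<forall>x y. pb N (Pfun (Suc m) x) (Pfun (Suc m) y) a b = 0)
   \<and> (\<forall>x y. pb N (Pfun m x) (Pfun m y) a b = 0)
   \<and> (\<forall>x y. 2 * (x - y) * pb N (Pfun (Suc m) x) (Pfun m y) a b
             = christoffel_darboux_numerator a b m x y - (x - y) * P a b m x * P a b m y)"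
proof (induction m)
  case 0
  have "pb N (\<lambda>p q. x - q 1) (\<lambda>p q. y - q 1) a b = 0" for x y
    by (simp add: pb_diff_left pb_coord_b_left dA_diff)
  then show ?case
    by (simp add: christoffel_darboux_numerator_def)
next
  case (Suc m)
  then show ?case
    using pb_P_step[of m N] by simp
qed

theorem theorem2p3:
  fixes N n :: nat and c x y :: real and a b :: "nat \<Rightarrow> real"
  assumes "N \<ge> 1"
    and "\<forall>k\<in>{1..N-1}. a k > 0"
    and "(\<Sum>j=1..N. b j) = c"
    and "1 \<le> n" and "n \<le> N"
  shows "pb N (\<lambda>p q. P p q n x) (\<lambda>p q. P p q n y) a b = 0
       \<and> pb N (\<lambda>p q. P p q (n-1) x) (\<lambda>p q. P p q (n-1) y) a b = 0
       \<and> (x \<noteq> y \<longrightarrow>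
            2 * pb N (\<lambda>p q. P p q n x) (\<lambda>p q. P p q (n-1) y) a b
          = (P a b n x * P a b (n-1) y - P a b n y * P a b (n-1) x) / (x - y)
            - P a b (n-1) x * P a b (n-1) y)"
proof -
  obtain m where n: "n = Suc m"
    using \<open>1 \<le> n\<close> by (cases n) auto
  have "Suc m \<le> N"
    using \<open>n \<le> N\<close> n by simp
  note brackets = pb_P_brackets[OF this]
  show ?thesis
  proof (intro conjI impI)
    show "pb N (Pfun n x) (Pfun n y) a b = 0" "pb N (Pfun (n - 1) x) (Pfun (n - 1) y) a b = 0"
      using brackets n by simp_all
    assume "x \<noteq> y"
    have "2 * pb N (Pfun n x) (Pfun (n - 1) y) a b
        = 2 * (x - y) * pb N (Pfun (Suc m) x) (Pfun m y) a b / (x - y)"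
      using \<open>x \<noteq> y\<close> n by (simp add: field_simps)
    also have "\<dots>
        = (christoffel_darboux_numerator a b m x y - (x - y) * P a b m x * P a b m y) / (x - y)"
      using brackets by simp
    finally show "2 * pb N (Pfun n x) (Pfun (n - 1) y) a b
        = (P a b n x * P a b (n - 1) y - P a b n y * P a b (n - 1) x) / (x - y)
          - P a b (n - 1) x * P a b (n - 1) y"
      using \<open>x \<noteq> y\<close> n by (simp add: christoffel_darboux_numerator_def diff_divide_distrib)
  qed
qed

end
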